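(* $\mathfrak{icp}(\mathsf{meager}\setminus\{\emptyset\},\subseteq)=\operatorname{add}(\mathsf{meager})$.
   Context: $\mathsf{meager}$ is the ideal of meager subsets of $2^\omega$, ordered by inclusion. For a poset $(P,\le)$, $F\subseteq P$ is an incomparable family if for every $p\in P$ there is $q\in F$ with $p\not\le q$ and $q\not\le p$; $\mathfrak{icp}(P)$ is the minimal size of an incomparable family. $\operatorname{add}(\mathsf{meager})$ is the minimal size of a family of meager sets whose union is not meager. *)

theory Defs
  imports "HOL-Analysis.Analysis"
begin

definition cantor_space :: "(nat \<Rightarrow> bool) topology" where
  "cantor_space = product_topology (\<lambda>_. discrete_topology (UNIV :: bool set)) UNIV"

definition nowhere_dense_in :: "'a topology \<Rightarrow> 'a set \<Rightarrow> bool" where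
  "nowhere_dense_in X A \<longleftrightarrow> A \<subseteq> topspace X \<and> X interior_of (X closure_of A) = {}"

definition meager_in :: "'a topology \<Rightarrow> 'a set \<Rightarrow> bool" where
  "meager_in X A \<longleftrightarrow> A \<subseteq> topspace X \<and>
     (\<exists>N :: nat \<Rightarrow> 'a set. (\<forall>n. nowhere_dense_in X (N n)) \<and> A \<subseteq> (\<Union>n. N n))"

definition meager :: "(nat \<Rightarrow> bool) set set" where
  "meager = {A. meager_in cantor_space A}"

definition incomparable_family :: "'a set \<Rightarrow> ('a \<Rightarrow> 'a \<Rightarrow> bool) \<Rightarrow> 'a set \<Rightarrow> bool" where
  "incomparable_family P le F \<longleftrightarrow> F \<subseteq> P \<and>
     (\<forall>p\<in>P. \<exists>q\<in>F. \<not> le p q \<and> \<not> le q p)"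

definition icp_is :: "'a set \<Rightarrow> ('a \<Rightarrow> 'a \<Rightarrow> bool) \<Rightarrow> 'b rel \<Rightarrow> bool" where
  "icp_is P le \<kappa> \<longleftrightarrow>
     (\<exists>F. incomparable_family P le F \<and> (card_of F, \<kappa>) \<in> ordIso) \<and>
     (\<forall>F. incomparable_family P le F \<longrightarrow> (\<kappa>, card_of F) \<in> ordLeq)"

definition add_family :: "'a set set \<Rightarrow> 'a set set \<Rightarrow> bool" where
  "add_family I G \<longleftrightarrow> G \<subseteq> I \<and> \<Union>G \<notin> I"

definition add_is :: "'a set set \<Rightarrow> 'b rel \<Rightarrow> bool" where
  "add_is I \<kappa> \<longleftrightarrow>
     (\<exists>G. add_family I G \<and> (card_of G, \<kappa>) \<in> ordIso) \<and>
     (\<forall>G. add_family I G \<longrightarrow> (\<kappa>, card_of G) \<in> ordLeq)"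

end

theory Submission
  imports Defs
begin

unbundle cardinal_syntax

text \<open>
  Any incomparable family \<open>F\<close> in \<open>meager - {{}}\<close> is itself a family of meager sets with
  non-meager union: otherwise \<open>\<Union>F\<close> would be a nonempty meager set comparable with every
  member of \<open>F\<close>. Hence \<open>icp \<ge> add\<close>, for any family of sets in place of the meager ideal.
  Conversely, let \<open>G\<close> witness \<open>add(meager)\<close> (one exists since \<open>2\<^sup>\<omega>\<close> is not meager, by Baire).
  For a bit \<open>b\<close>, prefixing \<open>b\<close> to all sequences is a continuous open map whose preimages
  and images preserve meagerness, so no single meager set \<open>p\<close> contains \<open>b\<frown>M\<close> for every
  \<open>M \<in> G\<close>. A nonempty \<open>p\<close> cannot lie inside both \<open>0\<frown>M\<close> and \<open>1\<frown>M'\<close>, so the family of all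
  \<open>b\<frown>M\<close> is incomparable; it has size \<open>|G|\<close> because \<open>G\<close> is uncountable, meager sets forming
  a \<open>\<sigma>\<close>-ideal.
\<close>

lemma nowhere_dense_in_vimage:
  assumes f: "continuous_map X Y f" "open_map X Y f" and N: "nowhere_dense_in Y N"
  shows "nowhere_dense_in X (f -` N \<inter> topspace X)"
proof -
  let ?U = "X interior_of (X closure_of (f -` N \<inter> topspace X))"
  have "f ` ?U \<subseteq> f ` (X closure_of (f -` N \<inter> topspace X))"
    by (rule image_mono[OF interior_of_subset])
  also have "\<dots> \<subseteq> Y closure_of (f ` (f -` N \<inter> topspace X))"
    using continuous_map_image_closure_subset[OF f(1)] .
  also have "\<dots> \<subseteq> Y closure_of N"
    by (rule closure_of_mono) blast
  finally have "f ` ?U \<subseteq> Y interior_of (Y closure_of N)"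
    using f(2) by (intro interior_of_maximal) (simp_all add: open_map_def)
  then have "?U = {}"
    using N by (simp add: nowhere_dense_in_def)
  then show ?thesis
    by (simp add: nowhere_dense_in_def)
qed

lemma nowhere_dense_in_singleton:
  assumes "t1_space X" "x \<in> topspace X" "\<not> openin X {x}"
  shows "nowhere_dense_in X {x}"
proof -
  have "X closure_of {x} = {x}"
    using assms(1,2) by (simp add: closure_of_closedin t1_space_closedin_singleton)
  moreover have "X interior_of {x} = {}"
    using assms(3) interior_of_subset[of X "{x}"] interior_of_eq[of X "{x}"]
    by (metis subset_singletonD)
  ultimately show ?thesis
    using assms(2) by (simp add: nowhere_dense_in_def)
qed

lemma meager_in_iff_countable_cover:
  "meager_in X A \<longleftrightarrow> A \<subseteq> topspace X \<and>
     (\<exists>\<N>. countable \<N> \<and> (\<forall>N\<in>\<N>. nowhere_dense_in X N) \<and> A \<subseteq> \<Union>\<N>)"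
proof
  assume "meager_in X A"
  then obtain N :: "nat \<Rightarrow> _" where "A \<subseteq> topspace X" "\<forall>n. nowhere_dense_in X (N n)" "A \<subseteq> (\<Union>n. N n)"
    unfolding meager_in_def by blast
  then show "A \<subseteq> topspace X \<and> (\<exists>\<N>. countable \<N> \<and> (\<forall>N\<in>\<N>. nowhere_dense_in X N) \<and> A \<subseteq> \<Union>\<N>)"
    by (intro conjI exI[of _ "range N"]) auto
next
  assume "A \<subseteq> topspace X \<and> (\<exists>\<N>. countable \<N> \<and> (\<forall>N\<in>\<N>. nowhere_dense_in X N) \<and> A \<subseteq> \<Union>\<N>)"
  then obtain \<N> where A: "A \<subseteq> topspace X" and \<N>: "countable \<N>" "\<forall>N\<in>\<N>. nowhere_dense_in X N" "A \<subseteq> \<Union>\<N>"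
    by blast
  \<comment> \<open>Adding the empty set makes the cover nonempty, so that it can be enumerated.\<close>
  let ?N = "from_nat_into (insert {} \<N>)"
  have "range ?N = insert {} \<N>"
    using \<N>(1) by simp
  moreover have "nowhere_dense_in X {}"
    by (simp add: nowhere_dense_in_def)
  ultimately have "\<forall>n. nowhere_dense_in X (?N n)"
    using \<N>(2) by (metis insert_iff rangeI)
  moreover have "A \<subseteq> (\<Union>n. ?N n)"
    using \<open>range ?N = insert {} \<N>\<close> \<N>(3) by simp
  ultimately show "meager_in X A"
    unfolding meager_in_def using A by blast
qed

lemma meager_in_mono: "meager_in X A \<Longrightarrow> B \<subseteq> A \<Longrightarrow> meager_in X B"
  unfolding meager_in_def by blast

lemma meager_in_Union:
  assumes "countable \<A>" "\<And>A. A \<in> \<A> \<Longrightarrow> meager_in X A"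
  shows "meager_in X (\<Union>\<A>)"
proof -
  have "\<forall>A\<in>\<A>. \<exists>\<N>. countable \<N> \<and> (\<forall>N\<in>\<N>. nowhere_dense_in X N) \<and> A \<subseteq> \<Union>\<N>"
    using assms(2) unfolding meager_in_iff_countable_cover by blast
  then obtain \<N> where \<N>: "\<forall>A\<in>\<A>. countable (\<N> A) \<and> (\<forall>N\<in>\<N> A. nowhere_dense_in X N) \<and> A \<subseteq> \<Union>(\<N> A)"
    by (rule bchoice[elim_format]) blast
  have "\<Union>\<A> \<subseteq> topspace X"
    using assms(2) unfolding meager_in_def by blast
  moreover have "countable (\<Union>(\<N> ` \<A>))"
    using assms(1) \<N> by (intro countable_UN) auto
  moreover have "\<forall>N\<in>\<Union>(\<N> ` \<A>). nowhere_dense_in X N"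
    using \<N> by auto
  moreover have "\<Union>\<A> \<subseteq> \<Union>(\<Union>(\<N> ` \<A>))"
  proof (rule Union_least)
    fix A assume "A \<in> \<A>"
    then show "A \<subseteq> \<Union>(\<Union>(\<N> ` \<A>))"
      using \<N> by (meson UN_upper Union_mono order_trans)
  qed
  ultimately show ?thesis
    unfolding meager_in_iff_countable_cover by (intro conjI exI[of _ "\<Union>(\<N> ` \<A>)"])
qed

lemma meager_in_vimage:
  assumes f: "continuous_map X Y f" "open_map X Y f" and A: "meager_in Y A"
  shows "meager_in X (f -` A \<inter> topspace X)"
proof -
  obtain N :: "nat \<Rightarrow> _" where N: "\<And>n. nowhere_dense_in Y (N n)" "A \<subseteq> (\<Union>n. N n)"
    using A unfolding meager_in_def by blast
  show ?thesis
    unfolding meager_in_def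
  proof (intro conjI exI[of _ "\<lambda>n. f -` N n \<inter> topspace X"] allI)
    show "f -` A \<inter> topspace X \<subseteq> (\<Union>n. f -` N n \<inter> topspace X)"
      using N(2) by blast
  qed (simp_all add: nowhere_dense_in_vimage[OF f N(1)])
qed

lemma not_meager_in_topspace:
  assumes "completely_metrizable_space X \<or> locally_compact_space X \<and> regular_space X"
    and "topspace X \<noteq> {}"
  shows "\<not> meager_in X (topspace X)"
proof
  assume "meager_in X (topspace X)"
  then obtain N :: "nat \<Rightarrow> _" where N: "\<And>n. nowhere_dense_in X (N n)" "topspace X \<subseteq> (\<Union>n. N n)"
    unfolding meager_in_def by blast
  have "X interior_of (\<Union>n. X closure_of N n) = {}"
    by (rule Baire_category_alt[OF assms(1)]) (use N(1) in \<open>auto simp: nowhere_dense_in_def\<close>)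
  moreover have cover: "topspace X \<subseteq> (\<Union>n. X closure_of N n)"
  proof
    fix x assume "x \<in> topspace X"
    then obtain n where "x \<in> N n"
      using N(2) by blast
    then show "x \<in> (\<Union>n. X closure_of N n)"
      using N(1)[of n] closure_of_subset[of "N n" X] unfolding nowhere_dense_in_def by blast
  qed
  then have "topspace X \<subseteq> X interior_of (\<Union>n. X closure_of N n)"
    using interior_of_mono[OF cover, of X] by simp
  ultimately show False
    using assms(2) by simp
qed

lemma add_family_if_incomparable_family:
  assumes F: "incomparable_family (I - {{}}) (\<subseteq>) F" and I: "I - {{}} \<noteq> {}"
  shows "add_family I F"
proof -
  obtain q where q: "q \<in> F"
    using F I unfolding incomparable_family_def by blast
  have "\<Union>F \<notin> I"
  proof
    assume "\<Union>F \<in> I"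
    moreover have "\<Union>F \<noteq> {}"
      using F q unfolding incomparable_family_def by blast
    ultimately show False
      using F unfolding incomparable_family_def by blast
  qed
  then show ?thesis
    using F unfolding incomparable_family_def add_family_def by blast
qed

lemma exists_minimal_add_family:
  assumes "add_family I G"
  obtains G0 where "add_family I G0" "\<And>G. add_family I G \<Longrightarrow> |G0| \<le>o |G|"
proof -
  obtain r where "r \<in> card_of ` {G. add_family I G}" "\<forall>r'\<in>card_of ` {G. add_family I G}. r \<le>o r'"
    using exists_minim_Card_order[of "card_of ` {G. add_family I G}"] assms
    by (auto simp: card_of_Card_order)
  then show ?thesis
    using that by blast
qed

lemma icp_is_add_is:
  fixes I :: "'a set set"
  assumes I: "I - {{}} \<noteq> {}"
    and G0: "add_family I G0" "\<And>G. add_family I G \<Longrightarrow> |G0| \<le>o |G|"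
    and F: "incomparable_family (I - {{}}) (\<subseteq>) F" "|F| \<le>o |G0|"
  shows "\<exists>\<kappa> :: 'a set set rel. icp_is (I - {{}}) (\<subseteq>) \<kappa> \<and> add_is I \<kappa>"
proof -
  \<comment> \<open>\<open>|G0|\<close> orders \<open>'a set\<close> but \<open>\<kappa>\<close> must order \<open>'a set set\<close>;
    transport it along \<open>M \<mapsto> {M}\<close>.\<close>
  define \<kappa> where "\<kappa> = |(\<lambda>M. {M}) ` G0|"
  have "bij_betw (\<lambda>M. {M}) G0 ((\<lambda>M. {M}) ` G0)"
    by (simp add: bij_betw_def inj_on_def)
  then have iso: "(card_of G0, \<kappa>) \<in> ordIso"
    unfolding \<kappa>_def using card_of_ordIso by blast
  then have iso': "(\<kappa>, card_of G0) \<in> ordIso"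
    by (rule ordIso_symmetric)
  have lower: "|G0| \<le>o |F'|" if "incomparable_family (I - {{}}) (\<subseteq>) F'" for F'
    using G0(2) add_family_if_incomparable_family[OF that I] .
  have "(card_of F, card_of G0) \<in> ordIso"
    using F(2) lower[OF F(1)] by (simp add: ordIso_iff_ordLeq)
  then have "icp_is (I - {{}}) (\<subseteq>) \<kappa>"
    unfolding icp_is_def using F(1) ordIso_transitive[OF _ iso] ordIso_ordLeq_trans[OF iso' lower]
    by blast
  moreover have "add_is I \<kappa>"
    unfolding add_is_def using G0 iso ordIso_ordLeq_trans[OF iso' G0(2)] by blast
  ultimately show ?thesis
    by blast
qed

lemma topspace_cantor_space [simp]: "topspace cantor_space = UNIV"
  by (simp add: cantor_space_def)

lemma openin_cantor_space:
  "openin cantor_space S \<longleftrightarrow> (\<forall>x\<in>S. \<exists>n. \<forall>y. (\<forall>i<n. y i = x i) \<longrightarrow> y \<in> S)"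
proof
  assume "openin cantor_space S"
  show "\<forall>x\<in>S. \<exists>n. \<forall>y. (\<forall>i<n. y i = x i) \<longrightarrow> y \<in> S"
  proof
    fix x assume "x \<in> S"
    then obtain U where fin: "finite {i. U i \<noteq> UNIV}" and x: "x \<in> Pi\<^sub>E UNIV U"
      and sub: "Pi\<^sub>E UNIV U \<subseteq> S"
      using \<open>openin cantor_space S\<close> unfolding cantor_space_def openin_product_topology_alt
      by auto
    obtain n where n: "\<forall>i\<in>{i. U i \<noteq> UNIV}. i < n"
      using fin finite_nat_set_iff_bounded by blast
    have "y \<in> S" if y: "\<forall>i<n. y i = x i" for y
    proof -
      have "y i \<in> U i" for i
      proof (cases "i < n")
        case True
        then show ?thesis
          using x y by (auto simp: PiE_iff)
      next
        case False
        then have "U i = UNIV"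
          using n by blast
        then show ?thesis
          by simp
      qed
      then show ?thesis
        using sub by (auto simp: PiE_iff)
    qed
    then show "\<exists>n. \<forall>y. (\<forall>i<n. y i = x i) \<longrightarrow> y \<in> S"
      by blast
  qed
next
  assume cyl: "\<forall>x\<in>S. \<exists>n. \<forall>y. (\<forall>i<n. y i = x i) \<longrightarrow> y \<in> S"
  show "openin cantor_space S"
    unfolding cantor_space_def openin_product_topology_alt
  proof
    fix x assume "x \<in> S"
    then obtain n where n: "\<forall>y. (\<forall>i<n. y i = x i) \<longrightarrow> y \<in> S"
      using cyl by blast
    define U where "U i = (if i < n then {x i} else UNIV)" for i
    have "{i. U i \<noteq> UNIV} \<subseteq> {..<n}"
      by (auto simp: U_def)
    then have "finite {i \<in> UNIV. U i \<noteq> topspace (discrete_topology UNIV)}"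
      by (simp add: finite_subset)
    moreover have "x \<in> Pi\<^sub>E UNIV U"
      by (simp add: PiE_iff U_def)
    moreover have "Pi\<^sub>E UNIV U \<subseteq> S"
      using n by (auto simp: U_def PiE_def Pi_def)
    ultimately show "\<exists>U. finite {i \<in> UNIV. U i \<noteq> topspace (discrete_topology UNIV)} \<and>
        (\<forall>i\<in>UNIV. openin (discrete_topology UNIV) (U i)) \<and> x \<in> Pi\<^sub>E UNIV U \<and> Pi\<^sub>E UNIV U \<subseteq> S"
      by auto
  qed
qed

lemma compact_space_cantor_space: "compact_space cantor_space"
  unfolding cantor_space_def compact_space_product_topology
  by (simp add: compact_space_discrete_topology)

lemma Hausdorff_space_cantor_space: "Hausdorff_space cantor_space"
  unfolding cantor_space_def Hausdorff_space_product_topology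
  by simp

lemma not_openin_cantor_space_singleton: "\<not> openin cantor_space {x}"
proof
  assume "openin cantor_space {x}"
  then obtain n where n: "\<forall>y. (\<forall>i<n. y i = x i) \<longrightarrow> y \<in> {x}"
    unfolding openin_cantor_space by auto
  have "x(n := \<not> x n) = x"
    using n[rule_format, of "x(n := \<not> x n)"] by simp
  then show False
    by (simp add: fun_upd_idem_iff)
qed

text \<open>\<open>case_nat b x\<close> is the sequence \<open>b\<frown>x\<close>, and \<open>\<lambda>x n. x (Suc n)\<close> deletes its first bit.\<close>

lemma continuous_map_cantor_space_shift:
  "continuous_map cantor_space cantor_space (\<lambda>x n. x (Suc n))"
  unfolding cantor_space_def continuous_map_componentwise_UNIV
  by (intro allI continuous_map_product_projection) simp

lemma continuous_map_cantor_space_case_nat: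
  "continuous_map cantor_space cantor_space (case_nat b)"
  unfolding cantor_space_def continuous_map_componentwise_UNIV
proof
  fix k
  show "continuous_map (product_topology (\<lambda>_. discrete_topology UNIV) UNIV)
      (discrete_topology UNIV) (\<lambda>x. case_nat b x k)"
  proof (cases k)
    case (Suc j)
    then show ?thesis
      using continuous_map_product_projection[of j UNIV "\<lambda>_. discrete_topology UNIV"] by simp
  qed simp
qed

lemma open_map_cantor_space_shift:
  "open_map cantor_space cantor_space (\<lambda>x n. x (Suc n))"
  unfolding open_map_def openin_cantor_space
proof (intro allI impI ballI)
  fix U :: "(nat \<Rightarrow> bool) set" and z
  assume "\<forall>x\<in>U. \<exists>n. \<forall>y. (\<forall>i<n. y i = x i) \<longrightarrow> y \<in> U" "z \<in> (\<lambda>x n. x (Suc n)) ` U"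
  then obtain x n where x: "z = (\<lambda>n. x (Suc n))" and n: "\<forall>y. (\<forall>i<n. y i = x i) \<longrightarrow> y \<in> U"
    by blast
  have "w \<in> (\<lambda>x n. x (Suc n)) ` U" if w: "\<forall>i<n. w i = z i" for w
  proof (rule image_eqI)
    show "w = (\<lambda>n. case_nat (x 0) w (Suc n))"
      by simp
    show "case_nat (x 0) w \<in> U"
      using w x by (intro n[rule_format]) (auto split: nat.split)
  qed
  then show "\<exists>n. \<forall>w. (\<forall>i<n. w i = z i) \<longrightarrow> w \<in> (\<lambda>x n. x (Suc n)) ` U"
    by blast
qed

lemma open_map_cantor_space_case_nat:
  "open_map cantor_space cantor_space (case_nat b)"
  unfolding open_map_def openin_cantor_space
proof (intro allI impI ballI)
  fix U :: "(nat \<Rightarrow> bool) set" and z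
  assume "\<forall>x\<in>U. \<exists>n. \<forall>y. (\<forall>i<n. y i = x i) \<longrightarrow> y \<in> U" "z \<in> case_nat b ` U"
  then obtain x n where x: "z = case_nat b x" and n: "\<forall>y. (\<forall>i<n. y i = x i) \<longrightarrow> y \<in> U"
    by blast
  have "w \<in> case_nat b ` U" if w: "\<forall>i<Suc n. w i = z i" for w
  proof (rule image_eqI)
    show "w = case_nat b (\<lambda>i. w (Suc i))"
      using w[rule_format, of 0] x by (simp add: fun_eq_iff split: nat.split)
    show "(\<lambda>i. w (Suc i)) \<in> U"
      using w x by (intro n[rule_format]) simp
  qed
  then show "\<exists>n. \<forall>w. (\<forall>i<n. w i = z i) \<longrightarrow> w \<in> case_nat b ` U"
    by blast
qed

lemma meager_singleton: "{x} \<in> meager"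
  using nowhere_dense_in_singleton[of cantor_space x] Hausdorff_space_cantor_space
    Hausdorff_imp_t1_space not_openin_cantor_space_singleton
  unfolding meager_def meager_in_iff_countable_cover
  by (intro CollectI conjI exI[of _ "{{x}}"]) auto

lemma meager_case_nat_image: "M \<in> meager \<Longrightarrow> case_nat b ` M \<in> meager"
  using meager_in_vimage[OF continuous_map_cantor_space_shift open_map_cantor_space_shift]
    meager_in_mono[of cantor_space "(\<lambda>x n. x (Suc n)) -` M" "case_nat b ` M"]
  by (force simp: meager_def)

lemma meager_case_nat_vimage: "M \<in> meager \<Longrightarrow> case_nat b -` M \<in> meager"
  using meager_in_vimage[OF continuous_map_cantor_space_case_nat open_map_cantor_space_case_nat]
  by (simp add: meager_def)

lemma add_family_meager_singletons: "add_family meager ((\<lambda>x. {x}) ` UNIV)"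
proof -
  have "UNIV \<notin> meager"
    using not_meager_in_topspace[of cantor_space] compact_space_cantor_space
      Hausdorff_space_cantor_space compact_imp_locally_compact_space
      compact_Hausdorff_imp_regular_space
    by (auto simp: meager_def)
  then show ?thesis
    using meager_singleton by (auto simp: add_family_def)
qed

lemma uncountable_add_family_meager: "add_family meager G \<Longrightarrow> uncountable G"
  using meager_in_Union[of G cantor_space] by (auto simp: add_family_def meager_def)

definition prefixed_family :: "(nat \<Rightarrow> bool) set set \<Rightarrow> (nat \<Rightarrow> bool) set set" where
  "prefixed_family G = (\<Union>b. (\<lambda>M. case_nat b ` M) ` (G - {{}}))"

lemma incomparable_prefixed_family:
  assumes G: "add_family meager G"
  shows "incomparable_family (meager - {{}}) (\<subseteq>) (prefixed_family G)"
  unfolding incomparable_family_def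
proof (intro conjI ballI)
  show "prefixed_family G \<subseteq> meager - {{}}"
    using G by (auto simp: prefixed_family_def add_family_def meager_case_nat_image)
  fix p assume p: "p \<in> meager - {{}}"
  have escape: "\<exists>M\<in>G - {{}}. \<not> case_nat b ` M \<subseteq> p" for b
  proof (rule ccontr)
    assume "\<not> ?thesis"
    then have "\<Union>G \<subseteq> case_nat b -` p"
      by blast
    moreover have "case_nat b -` p \<in> meager"
      using p meager_case_nat_vimage by blast
    ultimately have "\<Union>G \<in> meager"
      using meager_in_mono[of cantor_space "case_nat b -` p" "\<Union>G"] by (simp add: meager_def)
    then show False
      using G by (simp add: add_family_def)
  qed
  obtain M0 M1 where M0: "M0 \<in> G - {{}}" "\<not> case_nat False ` M0 \<subseteq> p"
    and M1: "M1 \<in> G - {{}}" "\<not> case_nat True ` M1 \<subseteq> p"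
    using escape by meson
  have "\<not> (p \<subseteq> case_nat False ` M0 \<and> p \<subseteq> case_nat True ` M1)"
  proof
    assume "p \<subseteq> case_nat False ` M0 \<and> p \<subseteq> case_nat True ` M1"
    moreover obtain y where "y \<in> p"
      using p by blast
    ultimately have "y 0 = False" "y 0 = True"
      by auto
    then show False
      by simp
  qed
  then show "\<exists>q\<in>prefixed_family G. \<not> p \<subseteq> q \<and> \<not> q \<subseteq> p"
    using M0 M1 unfolding prefixed_family_def by blast
qed

lemma card_of_prefixed_family: "infinite G \<Longrightarrow> |prefixed_family G| \<le>o |G|"
  unfolding prefixed_family_def
proof (rule card_of_UNION_ordLeq_infinite)
  assume "infinite G"
  then show "|UNIV :: bool set| \<le>o |G|"
    by (intro ordLess_imp_ordLeq finite_ordLess_infinite card_of_Well_order) (simp_all add: Field_card_of)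
  show "\<forall>b\<in>UNIV. |(\<lambda>M. case_nat b ` M) ` (G - {{}})| \<le>o |G|"
    using ordLeq_transitive[OF card_of_image card_of_mono1[OF Diff_subset]] by blast
qed

theorem mainTheorem15:
  shows "\<exists>\<kappa> :: (nat \<Rightarrow> bool) set set rel.
           icp_is (meager - {{}}) (\<subseteq>) \<kappa> \<and> add_is meager \<kappa>"
proof -
  obtain G0 where G0: "add_family meager G0" "\<And>G. add_family meager G \<Longrightarrow> |G0| \<le>o |G|"
    using exists_minimal_add_family[OF add_family_meager_singletons] by blast
  have "meager - {{}} \<noteq> {}"
    using meager_singleton by blast
  moreover have "|prefixed_family G0| \<le>o |G0|"
    using uncountable_add_family_meager[OF G0(1)] countable_finite card_of_prefixed_family by blast
  ultimately show ?thesis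
    using icp_is_add_is G0 incomparable_prefixed_family[OF G0(1)] by blast
qed

end
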